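(* Let $N\ge 1$, let $\mathbf{A}=(A_{ij})\in\mathbb{R}^{N\times N}$ with $A_{ij}\ge 0$ for $i\neq j$ and $A_{ii}=0$, let $D_i=\sum_{j=1}^N A_{ij}$, $\mathbf{D}=\operatorname{diag}(D_1,\dots,D_N)$, let $\beta_1,\dots,\beta_N>0$, and set $\mathbf{H}=\mathbf{A}-\mathbf{D}-\operatorname{diag}(\beta_1,\dots,\beta_N)$. Then for all $k,m\in\{1,\dots,N\}$ and every positive integer $p$: $[\mathbf{H}^{-p}]_{km}\ge 0$ if $p$ is even and $[\mathbf{H}^{-p}]_{km}\le 0$ if $p$ is odd. Moreover, if $[\mathbf{H}^{-p}]_{km}=0$, then node $k$ cannot be reached from node $m$, i.e. there is no directed walk $m=w_0,w_1,\dots,w_n=k$ with $A_{w_{t+1}w_t}>0$ for all $t$.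
   Context: The directed graph associated with $\mathbf{A}$ has an edge from node $j$ to node $i$ iff $A_{ij}>0$. $\mathbf{H}$ is strictly diagonally dominant with negative diagonal, hence invertible. *)

theory Defs
  imports "HOL-Analysis.Analysis"
begin

(* matrix power w.r.t. matrix multiplication ** (note: ^ on vec is componentwise) *)
fun matpow :: "real^'n^'n \<Rightarrow> nat \<Rightarrow> real^'n^'n" where
  "matpow M 0 = mat 1"
| "matpow M (Suc p) = M ** matpow M p"

definition diagm :: "real^'n \<Rightarrow> real^'n^'n" where
  "diagm v = (\<chi> i j. if i = j then v $ i else 0)"

definition reachable :: "real^'n^'n \<Rightarrow> 'n \<Rightarrow> 'n \<Rightarrow> bool" where
  "reachable A m k \<longleftrightarrow> (\<exists>ws. ws \<noteq> [] \<and> hd ws = m \<and> last ws = k \<and>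
      (\<forall>t. Suc t < length ws \<longrightarrow> A $ (ws ! Suc t) $ (ws ! t) > 0))"

end

theory Submission
  imports Defs
begin

text \<open>Write -H = diag c - A with c i = D i + \<beta> i, which strictly dominates the i-th row sum
  of the nonnegative matrix A. A minimum principle (at an index where x is smallest, dominance
  forces x \<ge> 0 whenever (diag c - A) x \<ge> 0) shows that -H is invertible with entrywise
  nonnegative inverse G. The identity c i * G i j = (\<Sum>l. A i l * G l j) + \<delta> i j makes the
  diagonal of G positive and propagates positivity along edges, so G k m > 0 whenever k is
  reachable from m, and then (G^p) k m \<ge> G k m * (G^(p-1)) m m > 0. Finally H^-p = (-1)^p G^p.\<close>

lemma matpow_scaleR: "matpow (a *\<^sub>R X) p = a ^ p *\<^sub>R matpow X p"
  by (induction p) (simp_all add: matrix_scalar_ac scalar_matrix_assoc[symmetric])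

lemma matpow_nonneg:
  assumes "\<And>i j. 0 \<le> G $ i $ j"
  shows "0 \<le> matpow G p $ i $ j"
  by (induction p arbitrary: i j) (simp_all add: mat_def matrix_matrix_mult_def assms sum_nonneg)

lemma matpow_Suc_entry_ge:
  assumes "\<And>i j. 0 \<le> G $ i $ j"
  shows "G $ k $ l * matpow G q $ l $ m \<le> matpow G (Suc q) $ k $ m"
  unfolding matpow.simps matrix_matrix_mult_def
  by (simp, intro member_le_sum) (simp_all add: assms matpow_nonneg)

lemma matpow_entry_pos:
  assumes nonneg: "\<And>i j. 0 \<le> G $ i $ j" and "0 < G $ k $ m" and diag: "0 < G $ m $ m"
    and "0 < p"
  shows "0 < matpow G p $ k $ m"
proof -
  have diag_pow: "0 < matpow G q $ m $ m" for q
  proof (induction q)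
    case 0
    then show ?case by (simp add: mat_def)
  next
    case (Suc q)
    then show ?case
      using diag matpow_Suc_entry_ge[OF nonneg, of m m q m] by (meson mult_pos_pos order_less_le_trans)
  qed
  obtain q where "p = Suc q" using \<open>0 < p\<close> gr0_conv_Suc by blast
  then show ?thesis
    using \<open>0 < G $ k $ m\<close> diag_pow[of q] matpow_Suc_entry_ge[OF nonneg, of k m q m]
    by (meson mult_pos_pos order_less_le_trans)
qed

lemma column_matrix_mult: "column j (A ** B) = A *v column j B"
  by (simp add: column_def matrix_matrix_mult_def matrix_vector_mult_def vec_eq_iff)

lemma diagm_mult_vec: "(diagm c *v x) $ i = c $ i * x $ i"
  by (simp add: diagm_def matrix_vector_mult_def if_distrib if_distribR cong del: if_weak_cong)

lemma diagm_diff_mult_vec: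
  "((diagm c - A) *v x) $ i = c $ i * x $ i - (\<Sum>j\<in>UNIV. A $ i $ j * x $ j)"
  by (simp add: matrix_vector_mult_diff_rdistrib diagm_mult_vec) (simp add: matrix_vector_mult_def)

lemma matrix_inv_right:
  assumes "invertible (H::real^'n^'n)"
  shows "H ** matrix_inv H = mat 1"
  using assms unfolding invertible_def matrix_inv_def by (rule someI_ex[THEN conjunct1])

lemma ex_index_min: "\<exists>i0. \<forall>i. (x::real^'n) $ i0 \<le> x $ i"
proof -
  have "Min (range (($) x)) \<in> range (($) x)"
    by (rule Min_in) auto
  then obtain i0 where i0: "x $ i0 = Min (range (($) x))"
    by (metis imageE)
  have "x $ i0 \<le> x $ i" for i
    unfolding i0 by (rule Min_le) auto
  then show ?thesis by blast
qed

lemma reachable_induct [consumes 1, case_names base step]: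
  assumes "reachable A m k" and "P m" and "\<And>i l. P l \<Longrightarrow> 0 < A $ i $ l \<Longrightarrow> P i"
  shows "P k"
proof -
  obtain ws where ws: "ws \<noteq> []" "hd ws = m" "last ws = k"
    and edges: "\<And>t. Suc t < length ws \<Longrightarrow> 0 < A $ (ws ! Suc t) $ (ws ! t)"
    using assms(1) unfolding reachable_def by blast
  have "P (ws ! t)" if "t < length ws" for t
    using that
  proof (induction t)
    case 0
    then show ?case using ws \<open>P m\<close> by (simp add: hd_conv_nth)
  next
    case (Suc t)
    then show ?case using assms(3) edges[of t] by simp
  qed
  then have "P (ws ! (length ws - 1))" using ws(1) by simp
  then show ?thesis using ws by (simp add: last_conv_nth)
qed

locale strictly_dominant =
  fixes A :: "real^'n^'n" and c :: "real^'n"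
  assumes nonneg: "\<And>i j. 0 \<le> A $ i $ j"
    and dominant: "\<And>i. (\<Sum>j\<in>UNIV. A $ i $ j) < c $ i"
begin

abbreviation M :: "real^'n^'n" where "M \<equiv> diagm c - A"

lemma c_pos: "0 < c $ i"
  using dominant[of i] sum_nonneg[of UNIV "\<lambda>j. A $ i $ j"] nonneg by (meson le_less_trans)

lemma nonneg_if_mult_nonneg:
  assumes "\<And>i. 0 \<le> (M *v x) $ i"
  shows "0 \<le> x $ i"
proof -
  obtain i0 where min: "\<And>i. x $ i0 \<le> x $ i" using ex_index_min by blast
  have "(\<Sum>j\<in>UNIV. A $ i0 $ j) * x $ i0 \<le> (\<Sum>j\<in>UNIV. A $ i0 $ j * x $ j)"
    unfolding sum_distrib_right by (intro sum_mono mult_left_mono min nonneg)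
  also have "\<dots> \<le> c $ i0 * x $ i0"
    using assms[of i0] by (simp add: diagm_diff_mult_vec)
  finally have "0 \<le> (c $ i0 - (\<Sum>j\<in>UNIV. A $ i0 $ j)) * x $ i0"
    by (simp add: algebra_simps)
  then have "0 \<le> x $ i0"
    using dominant[of i0] by (simp add: zero_le_mult_iff)
  then show ?thesis using min[of i] by linarith
qed

lemma M_invertible: "invertible M"
proof -
  have "x = 0" if "M *v x = 0" for x
  proof -
    have "M *v - x = 0" using that by (simp add: matrix_vector_mult_def sum_negf vec_eq_iff)
    then have "0 \<le> x $ i" "0 \<le> (- x) $ i" for i
      using that nonneg_if_mult_nonneg by (metis order_refl zero_index)+
    then show ?thesis by (simp add: vec_eq_iff eq_iff)
  qed
  then show ?thesis
    using invertible_left_inverse matrix_left_invertible_ker by blast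
qed

context
  fixes G :: "real^'n^'n"
  assumes right_inverse: "M ** G = mat 1"
begin

lemma mult_column_right_inverse: "(M *v column j G) $ i = (if i = j then 1 else 0)"
proof -
  have "M *v column j G = column j (mat 1)"
    by (simp only: column_matrix_mult[symmetric] right_inverse)
  then show ?thesis by (simp add: column_def mat_def)
qed

lemma right_inverse_entry:
  "c $ i * G $ i $ j = (\<Sum>l\<in>UNIV. A $ i $ l * G $ l $ j) + (if i = j then 1 else 0)"
  using mult_column_right_inverse[of j i] by (simp add: diagm_diff_mult_vec column_def)

lemma right_inverse_nonneg: "0 \<le> G $ i $ j"
  using nonneg_if_mult_nonneg[of "column j G" i] mult_column_right_inverse
  by (simp add: column_def)

lemma right_inverse_diag_pos: "0 < G $ i $ i"
proof -
  have "0 \<le> (\<Sum>l\<in>UNIV. A $ i $ l * G $ l $ i)"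
    by (simp add: sum_nonneg nonneg right_inverse_nonneg)
  then have "0 < c $ i * G $ i $ i" using right_inverse_entry[of i i] by simp
  then show ?thesis using c_pos[of i] by (simp add: zero_less_mult_iff)
qed

lemma right_inverse_pos_step:
  assumes "0 < G $ l $ j" and "0 < A $ i $ l"
  shows "0 < G $ i $ j"
proof -
  have "A $ i $ l * G $ l $ j \<le> (\<Sum>l\<in>UNIV. A $ i $ l * G $ l $ j)"
    by (intro member_le_sum) (simp_all add: nonneg right_inverse_nonneg)
  also have "\<dots> \<le> c $ i * G $ i $ j" using right_inverse_entry[of i j] by simp
  finally have "0 < c $ i * G $ i $ j" using assms by (meson mult_pos_pos order_less_le_trans)
  then show ?thesis using c_pos[of i] by (simp add: zero_less_mult_iff)
qed

lemma right_inverse_pos_if_reachable: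
  assumes "reachable A m k"
  shows "0 < G $ k $ m"
  using assms
proof (induction rule: reachable_induct)
  case base
  then show ?case by (rule right_inverse_diag_pos)
next
  case (step i l)
  then show ?case by (rule right_inverse_pos_step)
qed

end

end

theorem lemma2:
  fixes A :: "real^'n^'n" and \<beta> :: "real^'n" and H :: "real^'n^'n"
    and k m :: 'n and p :: nat
  assumes offdiag: "\<And>i j. i \<noteq> j \<Longrightarrow> A $ i $ j \<ge> 0"
    and diag0: "\<And>i. A $ i $ i = 0"
    and beta_pos: "\<And>i. \<beta> $ i > 0"
    and H_def: "H = A - diagm (\<chi> i. \<Sum>j\<in>UNIV. A $ i $ j) - diagm \<beta>"
    and p_pos: "p > 0"
  shows "(even p \<longrightarrow> matpow (matrix_inv H) p $ k $ m \<ge> 0)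
    \<and> (odd p \<longrightarrow> matpow (matrix_inv H) p $ k $ m \<le> 0)
    \<and> (matpow (matrix_inv H) p $ k $ m = 0 \<longrightarrow> \<not> reachable A m k)"
proof -
  define c where "c = (\<chi> i. (\<Sum>j\<in>UNIV. A $ i $ j) + \<beta> $ i)"
  interpret strictly_dominant A c
  proof
    show "0 \<le> A $ i $ j" for i j
      by (cases "i = j") (simp_all add: diag0 offdiag)
    show "(\<Sum>j\<in>UNIV. A $ i $ j) < c $ i" for i
      using beta_pos[of i] by (simp add: c_def)
  qed
  have H: "H = (-1) *\<^sub>R M"
    unfolding H_def c_def diagm_def by (simp add: vec_eq_iff)
  define G where "G = (-1) *\<^sub>R matrix_inv H"
  have "M ** G = H ** matrix_inv H"
    unfolding G_def H by (rule matrix_scalar_ac)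
  also have "\<dots> = mat 1"
    using H scalar_invertible[OF _ M_invertible, of "-1"] by (simp add: matrix_inv_right)
  finally have G: "M ** G = mat 1" .
  have "matrix_inv H = (-1) *\<^sub>R G" by (simp add: G_def)
  then have "matpow (matrix_inv H) p = (-1) ^ p *\<^sub>R matpow G p"
    by (simp only: matpow_scaleR)
  then have inv_pow_entry: "matpow (matrix_inv H) p $ k $ m = (-1) ^ p * matpow G p $ k $ m"
    by simp
  have "0 \<le> matpow G p $ k $ m"
    by (intro matpow_nonneg right_inverse_nonneg[OF G])
  moreover have "0 < matpow G p $ k $ m" if "reachable A m k"
    by (intro matpow_entry_pos right_inverse_nonneg[OF G] right_inverse_pos_if_reachable[OF G]
        right_inverse_diag_pos[OF G] p_pos that)
  ultimately show ?thesis
    by (auto simp: inv_pow_entry)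
qed

end
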